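(* For any fuzzifying topological space $(X,\tau)$ and $A\subseteq X$, $$\max\big(0,\ L_PC(X,\tau)+F_P(A)-1\big)\le L_PC(A,\tau/A),$$ i.e. $\vDash (X,\tau)\in L_PC\otimes A\in F_P\to(A,\tau/A)\in L_PC$.
   Context: Łukasiewicz semantics: $[\varphi\otimes\psi]=\max(0,[\varphi]+[\psi]-1)$, $[\varphi\to\psi]=\min(1,1-[\varphi]+[\psi])$, $[\forall]=\inf$, $[\exists]=\sup$, $\vDash$ means value $1$. A fuzzifying topology on $X$ is $\tau:P(X)\to[0,1]$ with $\tau(X)=1$, $\tau(A\cap B)\ge\min(\tau(A),\tau(B))$, $\tau(\bigcup A_\lambda)\ge\inf\tau(A_\lambda)$. $N_x(A)=\sup_{x\in B\subseteq A}\tau(B)$; $Cl(A)(x)=1-N_x(X\setminus A)$; for $\mu:X\to[0,1]$, $Int(\mu)(x)=\sup_{x\in B}\min(\tau(B),\inf_{y\in B}\mu(y))$. Pre-open degrees $\tau_P(A)=\inf_{x\in A}Int(Cl(A))(x)$; $F_P(A)=\tau_P(X\setminus A)$; $N^P_x(A)=\sup_{x\in B\subseteq A}\tau_P(B)$. For $G\subseteq X$: $(\tau_P/G)(B)=\sup\{\tau_P(V):V\cap G=B\}$, $B\subseteq G$. Compactness degree of a set $G$ w.r.t. $\rho:P(G)\to[0,1]$: with $K(\Re,G)=\inf_{x\in G}\sup_{B\ni x}\Re(B)$, $[\Re\subseteq\rho]=\inf_B\min(1,1-\Re(B)+\rho(B))$, $\wp\le\Re$ pointwise, $FF(\wp)=1-\inf\{\delta\in[0,1]:\{B:\wp(B)>\delta\}\text{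 finite}\}$, $\Gamma(G,\rho)=\inf_{\Re}\min\big(1,1-\max(0,K(\Re,G)+[\Re\subseteq\rho]-1)+\sup_{\wp\le\Re}\max(0,K(\wp,G)+FF(\wp)-1)\big)$. $\Gamma_P(G)=\Gamma(G,\tau_P/G)$. Locally strong compactness: $L_PC(X,\tau)=\inf_{x\in X}\sup_{B\subseteq X}\max(0,N^P_x(B)+\Gamma_P(B)-1)$; for the subspace, with $N^{P^A}_x(G)=\sup_{x\in C\subseteq G}(\tau_P/A)(C)$, $L_PC(A,\tau/A)=\inf_{x\in A}\sup_{G\subseteq A}\max(0,N^{P^A}_x(G)+\Gamma(G,\tau_P/G)-1)$. *)

theory Defs
  imports Complex_Main
begin

text \<open>Truth values live in [0,1]; infimum of the empty family is 1, supremum of the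
empty family is 0 (the usual conventions of fuzzy logic).  A space is given by an
explicit carrier X :: 'a set and tau :: 'a set => real, only its values on subsets of X matter.\<close>

definition Inf01 :: "real set \<Rightarrow> real" where
  "Inf01 S = (if S = {} then 1 else Inf S)"

definition Sup01 :: "real set \<Rightarrow> real" where
  "Sup01 S = (if S = {} then 0 else Sup S)"

definition fuzzifying_topology :: "'a set \<Rightarrow> ('a set \<Rightarrow> real) \<Rightarrow> bool" where
  "fuzzifying_topology X \<tau> \<longleftrightarrow>
     (\<forall>A. A \<subseteq> X \<longrightarrow> 0 \<le> \<tau> A \<and> \<tau> A \<le> 1) \<and>
     \<tau> X = 1 \<and>
     (\<forall>A B. A \<subseteq> X \<longrightarrow> B \<subseteq> X \<longrightarrow> \<tau> (A \<inter> B) \<ge> min (\<tau> A) (\<tau> B)) \<and>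
     (\<forall>\<A>. \<A> \<subseteq> Pow X \<longrightarrow> \<tau> (\<Union>\<A>) \<ge> Inf01 (\<tau> ` \<A>))"

definition fnbhd :: "'a set \<Rightarrow> ('a set \<Rightarrow> real) \<Rightarrow> 'a \<Rightarrow> 'a set \<Rightarrow> real" where
  "fnbhd X \<tau> x A = Sup01 {\<tau> B | B. x \<in> B \<and> B \<subseteq> A \<and> B \<subseteq> X}"

definition fcl :: "'a set \<Rightarrow> ('a set \<Rightarrow> real) \<Rightarrow> 'a set \<Rightarrow> 'a \<Rightarrow> real" where
  "fcl X \<tau> A x = 1 - fnbhd X \<tau> x (X - A)"

definition fint :: "'a set \<Rightarrow> ('a set \<Rightarrow> real) \<Rightarrow> ('a \<Rightarrow> real) \<Rightarrow> 'a \<Rightarrow> real" where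
  "fint X \<tau> \<mu> x = Sup01 {min (\<tau> B) (Inf01 (\<mu> ` B)) | B. x \<in> B \<and> B \<subseteq> X}"

definition tauP :: "'a set \<Rightarrow> ('a set \<Rightarrow> real) \<Rightarrow> 'a set \<Rightarrow> real" where
  "tauP X \<tau> A = Inf01 ((\<lambda>x. fint X \<tau> (fcl X \<tau> A) x) ` A)"

definition FP :: "'a set \<Rightarrow> ('a set \<Rightarrow> real) \<Rightarrow> 'a set \<Rightarrow> real" where
  "FP X \<tau> A = tauP X \<tau> (X - A)"

definition NP :: "'a set \<Rightarrow> ('a set \<Rightarrow> real) \<Rightarrow> 'a \<Rightarrow> 'a set \<Rightarrow> real" where
  "NP X \<tau> x A = Sup01 {tauP X \<tau> B | B. x \<in> B \<and> B \<subseteq> A \<and> B \<subseteq> X}"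

definition tauP_rel :: "'a set \<Rightarrow> ('a set \<Rightarrow> real) \<Rightarrow> 'a set \<Rightarrow> 'a set \<Rightarrow> real" where
  "tauP_rel X \<tau> G B = Sup01 {tauP X \<tau> V | V. V \<subseteq> X \<and> V \<inter> G = B}"

definition fam01 :: "'a set \<Rightarrow> ('a set \<Rightarrow> real) \<Rightarrow> bool" where
  "fam01 G R \<longleftrightarrow> (\<forall>B. B \<subseteq> G \<longrightarrow> 0 \<le> R B \<and> R B \<le> 1)"

definition Kdeg :: "('a set \<Rightarrow> real) \<Rightarrow> 'a set \<Rightarrow> real" where
  "Kdeg R G = Inf01 ((\<lambda>x. Sup01 {R B | B. x \<in> B \<and> B \<subseteq> G}) ` G)"

definition subdeg :: "'a set \<Rightarrow> ('a set \<Rightarrow> real) \<Rightarrow> ('a set \<Rightarrow> real) \<Rightarrow> real" where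
  "subdeg G R \<rho> = Inf01 {min 1 (1 - R B + \<rho> B) | B. B \<subseteq> G}"

definition FFdeg :: "'a set \<Rightarrow> ('a set \<Rightarrow> real) \<Rightarrow> real" where
  "FFdeg G P = 1 - Inf01 {\<delta>. 0 \<le> \<delta> \<and> \<delta> \<le> 1 \<and> finite {B. B \<subseteq> G \<and> P B > \<delta>}}"

definition Gamma :: "'a set \<Rightarrow> ('a set \<Rightarrow> real) \<Rightarrow> real" where
  "Gamma G \<rho> = Inf01 {min 1 (1 - max 0 (Kdeg R G + subdeg G R \<rho> - 1)
        + Sup01 {max 0 (Kdeg P G + FFdeg G P - 1) | P.
                   fam01 G P \<and> (\<forall>B. B \<subseteq> G \<longrightarrow> P B \<le> R B)}) | R. fam01 G R}"

definition GammaP :: "'a set \<Rightarrow> ('a set \<Rightarrow> real) \<Rightarrow> 'a set \<Rightarrow> real" where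
  "GammaP X \<tau> G = Gamma G (tauP_rel X \<tau> G)"

definition LPC :: "'a set \<Rightarrow> ('a set \<Rightarrow> real) \<Rightarrow> real" where
  "LPC X \<tau> = Inf01 ((\<lambda>x. Sup01 {max 0 (NP X \<tau> x B + GammaP X \<tau> B - 1) | B. B \<subseteq> X}) ` X)"

definition NPsub :: "'a set \<Rightarrow> ('a set \<Rightarrow> real) \<Rightarrow> 'a set \<Rightarrow> 'a \<Rightarrow> 'a set \<Rightarrow> real" where
  "NPsub X \<tau> A x G = Sup01 {tauP_rel X \<tau> A C | C. x \<in> C \<and> C \<subseteq> G}"

definition LPC_sub :: "'a set \<Rightarrow> ('a set \<Rightarrow> real) \<Rightarrow> 'a set \<Rightarrow> real" where
  "LPC_sub X \<tau> A = Inf01 ((\<lambda>x. Sup01 {max 0 (NPsub X \<tau> A x G + GammaP X \<tau> G - 1) | G. G \<subseteq> A}) ` A)"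

end

(*
  Fix x in A and a set B containing x.  Every pre-open V with x in V, V <= B has trace V \cap A
  inside B \cap A, so N^P_x(B) <= N^{P^A}_x(B \cap A).  For compactness, a cover R of B \cap A by
  relatively pre-open sets extends to a cover of B by adding B - A = B \cap (X - A), which is
  relatively pre-open in B to degree at least F_P(A); a finite subfamily of the extended cover traces
  back on A to a finite subfamily of R.  This gives Gamma_P(B) + F_P(A) - 1 <= Gamma_P(B \cap A),
  and the theorem follows by taking the supremum over B and the infimum over x.
*)
theory Submission
  imports Defs
begin

section \<open>Bounded suprema and infima\<close>

lemma Sup01_upper: "x \<in> S \<Longrightarrow> (\<And>s. s \<in> S \<Longrightarrow> s \<le> 1) \<Longrightarrow> x \<le> Sup01 S"
  unfolding Sup01_def by (auto intro!: cSup_upper bdd_aboveI[where M = 1])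

lemma Sup01_least: "(\<And>s. s \<in> S \<Longrightarrow> s \<le> t) \<Longrightarrow> 0 \<le> t \<Longrightarrow> Sup01 S \<le> t"
  unfolding Sup01_def by (auto intro: cSup_least)

lemma Inf01_lower: "x \<in> S \<Longrightarrow> (\<And>s. s \<in> S \<Longrightarrow> 0 \<le> s) \<Longrightarrow> Inf01 S \<le> x"
  unfolding Inf01_def by (auto intro!: cInf_lower bdd_belowI[where m = 0])

lemma Inf01_greatest: "(\<And>s. s \<in> S \<Longrightarrow> t \<le> s) \<Longrightarrow> t \<le> 1 \<Longrightarrow> t \<le> Inf01 S"
  unfolding Inf01_def by (auto intro: cInf_greatest)

lemma Sup01_bounds:
  assumes "\<And>s. s \<in> S \<Longrightarrow> 0 \<le> s \<and> s \<le> 1"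
  shows "0 \<le> Sup01 S \<and> Sup01 S \<le> 1"
proof (cases "S = {}")
  case False
  then obtain x where "x \<in> S" by auto
  then show ?thesis using assms Sup01_upper[of x S] Sup01_least[of S 1] by force
qed (simp add: Sup01_def)

lemma Inf01_bounds:
  assumes "\<And>s. s \<in> S \<Longrightarrow> 0 \<le> s \<and> s \<le> 1"
  shows "0 \<le> Inf01 S \<and> Inf01 S \<le> 1"
proof (cases "S = {}")
  case False
  then obtain x where "x \<in> S" by auto
  then show ?thesis using assms Inf01_lower[of x S] Inf01_greatest[of S 0] by force
qed (simp add: Inf01_def)

lemma Inf01_antimono:
  assumes "S \<subseteq> T" and "\<And>t. t \<in> T \<Longrightarrow> 0 \<le> t \<and> t \<le> 1"
  shows "Inf01 T \<le> Inf01 S"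
proof (rule Inf01_greatest)
  fix s assume "s \<in> S"
  then show "Inf01 T \<le> s" using assms by (intro Inf01_lower) auto
qed (use Inf01_bounds[OF assms(2)] in simp)

lemma Sup01_upper_image: "P C \<Longrightarrow> (\<And>C. P C \<Longrightarrow> f C \<le> 1) \<Longrightarrow> f C \<le> Sup01 {f C | C. P C}"
  by (rule Sup01_upper) auto

lemma Sup01_image_bounds:
  "(\<And>C. P C \<Longrightarrow> 0 \<le> f C \<and> f C \<le> 1) \<Longrightarrow> 0 \<le> Sup01 {f C | C. P C} \<and> Sup01 {f C | C. P C} \<le> 1"
  by (rule Sup01_bounds) auto

lemma min_Sup01_le:
  assumes "\<And>s. s \<in> S \<Longrightarrow> min a s \<le> t" and "0 \<le> t"
  shows "min a (Sup01 S) \<le> t"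
proof (cases "a \<le> t")
  case False
  then have "Sup01 S \<le> t"
    using assms by (intro Sup01_least) (force simp: min_def split: if_splits)+
  then show ?thesis by simp
qed simp

lemma tauP_bounds:
  assumes "fuzzifying_topology X \<tau>"
  shows "0 \<le> tauP X \<tau> A \<and> tauP X \<tau> A \<le> 1"
proof -
  have \<tau>: "0 \<le> \<tau> B \<and> \<tau> B \<le> 1" if "B \<subseteq> X" for B
    using assms that by (auto simp: fuzzifying_topology_def)
  have cl: "0 \<le> fcl X \<tau> A y \<and> fcl X \<tau> A y \<le> 1" for y
    using Sup01_bounds[of "{\<tau> B | B. y \<in> B \<and> B \<subseteq> X - A \<and> B \<subseteq> X}"] \<tau>
    unfolding fcl_def fnbhd_def by fastforce
  have "0 \<le> fint X \<tau> (fcl X \<tau> A) x \<and> fint X \<tau> (fcl X \<tau> A) x \<le> 1" for x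
    unfolding fint_def
  proof (rule Sup01_bounds)
    fix s assume "s \<in> {min (\<tau> B) (Inf01 (fcl X \<tau> A ` B)) |B. x \<in> B \<and> B \<subseteq> X}"
    then obtain B where "s = min (\<tau> B) (Inf01 (fcl X \<tau> A ` B))" "B \<subseteq> X" by blast
    then show "0 \<le> s \<and> s \<le> 1"
      using \<tau>[of B] Inf01_bounds[of "fcl X \<tau> A ` B"] cl by auto
  qed
  then show ?thesis
    unfolding tauP_def by (intro Inf01_bounds) auto
qed

lemma tauP_rel_bounds:
  "fuzzifying_topology X \<tau> \<Longrightarrow> 0 \<le> tauP_rel X \<tau> G B \<and> tauP_rel X \<tau> G B \<le> 1"
  unfolding tauP_rel_def by (rule Sup01_bounds) (auto dest: tauP_bounds)

lemma NP_bounds: "fuzzifying_topology X \<tau> \<Longrightarrow> 0 \<le> NP X \<tau> x A \<and> NP X \<tau> x A \<le> 1"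
  unfolding NP_def by (rule Sup01_bounds) (auto dest: tauP_bounds)

lemma NPsub_bounds:
  "fuzzifying_topology X \<tau> \<Longrightarrow> 0 \<le> NPsub X \<tau> A x G \<and> NPsub X \<tau> A x G \<le> 1"
  unfolding NPsub_def by (rule Sup01_bounds) (auto dest: tauP_rel_bounds)

lemma Kdeg_bounds: "fam01 G R \<Longrightarrow> 0 \<le> Kdeg R G \<and> Kdeg R G \<le> 1"
  unfolding Kdeg_def fam01_def
  by (intro Inf01_bounds) (auto intro!: Sup01_bounds)

lemma fam01_tauP_rel: "fuzzifying_topology X \<tau> \<Longrightarrow> fam01 G (tauP_rel X \<tau> G)"
  by (simp add: fam01_def tauP_rel_bounds)

lemma subdeg_bounds: "fam01 G R \<Longrightarrow> fam01 G \<rho> \<Longrightarrow> 0 \<le> subdeg G R \<rho> \<and> subdeg G R \<rho> \<le> 1"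
  unfolding subdeg_def fam01_def by (rule Inf01_bounds) force

lemma FFdeg_bounds: "0 \<le> FFdeg G P \<and> FFdeg G P \<le> 1"
  using Inf01_bounds[of "{\<delta>. 0 \<le> \<delta> \<and> \<delta> \<le> 1 \<and> finite {B. B \<subseteq> G \<and> P B > \<delta>}}"]
  unfolding FFdeg_def by auto

section \<open>The compactness degree\<close>

lemma FFdeg_le:
  assumes "\<And>\<delta>. 0 \<le> \<delta> \<Longrightarrow> finite {E. E \<subseteq> B \<and> \<delta> < P E} \<Longrightarrow> finite {C. C \<subseteq> G \<and> \<delta> < Q C}"
  shows "FFdeg B P \<le> FFdeg G Q"
proof -
  have "Inf01 {\<delta>. 0 \<le> \<delta> \<and> \<delta> \<le> 1 \<and> finite {C. C \<subseteq> G \<and> \<delta> < Q C}}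
      \<le> Inf01 {\<delta>. 0 \<le> \<delta> \<and> \<delta> \<le> 1 \<and> finite {E. E \<subseteq> B \<and> \<delta> < P E}}"
    by (rule Inf01_antimono) (use assms in auto)
  then show ?thesis unfolding FFdeg_def by simp
qed

lemma Kdeg_le_Sup01:
  assumes R: "fam01 G R" and x: "x \<in> G"
  shows "Kdeg R G \<le> Sup01 {R C | C. x \<in> C \<and> C \<subseteq> G}"
  unfolding Kdeg_def
proof (rule Inf01_lower)
  fix s assume "s \<in> (\<lambda>y. Sup01 {R C | C. y \<in> C \<and> C \<subseteq> G}) ` G"
  then obtain y where s: "s = Sup01 {R C | C. y \<in> C \<and> C \<subseteq> G}" by blast
  have "0 \<le> Sup01 {R C | C. y \<in> C \<and> C \<subseteq> G}"
    by (rule Sup01_image_bounds[THEN conjunct1]) (use R in \<open>simp add: fam01_def\<close>)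
  then show "0 \<le> s" using s by simp
qed (use x in blast)

lemma le_KdegI:
  "(\<And>x. x \<in> G \<Longrightarrow> t \<le> Sup01 {R C | C. x \<in> C \<and> C \<subseteq> G}) \<Longrightarrow> t \<le> 1 \<Longrightarrow> t \<le> Kdeg R G"
  unfolding Kdeg_def by (rule Inf01_greatest) auto

lemma subdeg_le:
  assumes C: "C \<subseteq> G" and R: "fam01 G R" and \<rho>: "fam01 G \<rho>"
  shows "subdeg G R \<rho> \<le> 1 - R C + \<rho> C"
proof -
  have "subdeg G R \<rho> \<le> min 1 (1 - R C + \<rho> C)"
    unfolding subdeg_def
  proof (rule Inf01_lower)
    fix s assume "s \<in> {min 1 (1 - R B + \<rho> B) | B. B \<subseteq> G}"
    then obtain B where "s = min 1 (1 - R B + \<rho> B)" "B \<subseteq> G" by blast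
    then show "0 \<le> s" using R \<rho> by (simp add: fam01_def)
  qed (use C in blast)
  then show ?thesis by simp
qed

lemma one_le_subdeg: "(\<And>B. B \<subseteq> G \<Longrightarrow> R B \<le> \<rho> B) \<Longrightarrow> 1 \<le> subdeg G R \<rho>"
  unfolding subdeg_def by (rule Inf01_greatest) auto

lemma Kdeg_subdeg_le_Kdeg_min:
  assumes R: "fam01 G R" and \<rho>: "fam01 G \<rho>"
  shows "Kdeg R G + subdeg G R \<rho> - 1 \<le> Kdeg (\<lambda>C. min (R C) (\<rho> C)) G"
proof (rule le_KdegI)
  have sub: "0 \<le> subdeg G R \<rho> \<and> subdeg G R \<rho> \<le> 1" by (rule subdeg_bounds[OF R \<rho>])
  have min01: "0 \<le> min (R C) (\<rho> C) \<and> min (R C) (\<rho> C) \<le> 1" if "C \<subseteq> G" for C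
    using R \<rho> that unfolding fam01_def by (auto simp: min_def)
  fix x assume x: "x \<in> G"
  define M where "M = Sup01 {min (R C) (\<rho> C) | C. x \<in> C \<and> C \<subseteq> G}"
  have M0: "0 \<le> M"
    unfolding M_def by (rule Sup01_image_bounds[THEN conjunct1]) (use min01 in blast)
  have "Sup01 {R C | C. x \<in> C \<and> C \<subseteq> G} \<le> M + 1 - subdeg G R \<rho>"
  proof (rule Sup01_least)
    fix r assume "r \<in> {R C | C. x \<in> C \<and> C \<subseteq> G}"
    then obtain C where r: "r = R C" and C: "x \<in> C" "C \<subseteq> G" by blast
    have "min (R C) (\<rho> C) \<le> M"
      unfolding M_def by (rule Sup01_upper_image) (use C min01 in auto)
    then show "r \<le> M + 1 - subdeg G R \<rho>"
      using subdeg_le[OF C(2) R \<rho>] r sub by (auto simp: min_def split: if_splits)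
  qed (use M0 sub in linarith)
  then show "Kdeg R G + subdeg G R \<rho> - 1 \<le> M"
    using Kdeg_le_Sup01[OF R x] by linarith
qed (use Kdeg_bounds[OF R] subdeg_bounds[OF R \<rho>] in linarith)

definition finite_subcover_deg :: "'a set \<Rightarrow> ('a set \<Rightarrow> real) \<Rightarrow> real" where
  "finite_subcover_deg G R = Sup01 {max 0 (Kdeg P G + FFdeg G P - 1) | P.
     fam01 G P \<and> (\<forall>B. B \<subseteq> G \<longrightarrow> P B \<le> R B)}"

lemma Gamma_eq: "Gamma G \<rho> = Inf01 {min 1 (1 - max 0 (Kdeg R G + subdeg G R \<rho> - 1)
    + finite_subcover_deg G R) | R. fam01 G R}"
  by (simp add: Gamma_def finite_subcover_deg_def)

lemma finite_subcover_deg_bounds: "0 \<le> finite_subcover_deg G R \<and> finite_subcover_deg G R \<le> 1"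
  unfolding finite_subcover_deg_def
proof (rule Sup01_bounds)
  fix s assume "s \<in> {max 0 (Kdeg P G + FFdeg G P - 1) | P.
    fam01 G P \<and> (\<forall>B. B \<subseteq> G \<longrightarrow> P B \<le> R B)}"
  then obtain P where "fam01 G P" and s: "s = max 0 (Kdeg P G + FFdeg G P - 1)" by blast
  then show "0 \<le> s \<and> s \<le> 1" using Kdeg_bounds[of G P] FFdeg_bounds[of G P] by auto
qed

lemma Gamma_term_bounds:
  assumes "fam01 G R" and "fam01 G \<rho>"
  shows "0 \<le> min 1 (1 - max 0 (Kdeg R G + subdeg G R \<rho> - 1) + finite_subcover_deg G R)"
  using Kdeg_bounds[OF assms(1)] subdeg_bounds[OF assms] finite_subcover_deg_bounds[of G R]
  by auto

lemma Gamma_le: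
  assumes "fam01 G R" and "fam01 G \<rho>"
  shows "Gamma G \<rho> \<le> min 1 (1 - max 0 (Kdeg R G + subdeg G R \<rho> - 1) + finite_subcover_deg G R)"
  unfolding Gamma_eq
  by (rule Inf01_lower) (use assms Gamma_term_bounds[OF _ assms(2)] in blast)+

lemma Gamma_bounds: "fam01 G \<rho> \<Longrightarrow> 0 \<le> Gamma G \<rho> \<and> Gamma G \<rho> \<le> 1"
  unfolding Gamma_eq by (rule Inf01_bounds) (auto dest: Gamma_term_bounds)

lemma GammaP_bounds: "fuzzifying_topology X \<tau> \<Longrightarrow> 0 \<le> GammaP X \<tau> G \<and> GammaP X \<tau> G \<le> 1"
  unfolding GammaP_def by (rule Gamma_bounds) (rule fam01_tauP_rel)

section \<open>Passing between a set and its trace\<close>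

text \<open>A cover R of B \<inter> A becomes a cover of B: a member C of R is replaced by the members E
  of \<rho> with E \<inter> A = C, and the remaining points are covered by B - A.  Conversely, a subfamily
  of a cover of B traces back on A, its member B - A having empty trace.\<close>

definition extend_family :: "'a set \<Rightarrow> 'a set \<Rightarrow> ('a set \<Rightarrow> real) \<Rightarrow> ('a set \<Rightarrow> real) \<Rightarrow> 'a set \<Rightarrow> real"
  where "extend_family A B \<rho> R E = (if E = B - A then \<rho> E else min (R (E \<inter> A)) (\<rho> E))"

definition restrict_family :: "'a set \<Rightarrow> 'a set \<Rightarrow> ('a set \<Rightarrow> real) \<Rightarrow> 'a set \<Rightarrow> real"
  where "restrict_family A B P C = Sup01 {P E | E. E \<subseteq> B \<and> E \<inter> A = C \<and> E \<noteq> B - A}"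

lemma fam01_extend_family:
  assumes R: "fam01 (B \<inter> A) R" and \<rho>: "fam01 B \<rho>"
  shows "fam01 B (extend_family A B \<rho> R)"
  unfolding fam01_def
proof (intro allI impI)
  fix E assume E: "E \<subseteq> B"
  have "0 \<le> R (E \<inter> A) \<and> R (E \<inter> A) \<le> 1"
    using R E unfolding fam01_def by (meson Int_mono order_refl)
  moreover have "0 \<le> \<rho> E \<and> \<rho> E \<le> 1" using \<rho> E unfolding fam01_def by blast
  ultimately show "0 \<le> extend_family A B \<rho> R E \<and> extend_family A B \<rho> R E \<le> 1"
    unfolding extend_family_def by (cases "E = B - A") (auto simp: min_def)
qed

lemma min_le_Sup01_extend_family:
  assumes R: "fam01 (B \<inter> A) R" and \<rho>B: "fam01 B \<rho>B" and C: "x \<in> C" "C \<subseteq> B \<inter> A"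
    and trace: "g \<le> Sup01 {\<rho>B E | E. E \<subseteq> B \<and> E \<inter> A = C}"
  shows "min (R C) g \<le> Sup01 {extend_family A B \<rho>B R E | E. x \<in> E \<and> E \<subseteq> B}"
    (is "_ \<le> ?M")
proof -
  have R': "0 \<le> extend_family A B \<rho>B R E \<and> extend_family A B \<rho>B R E \<le> 1" if "E \<subseteq> B" for E
    using fam01_extend_family[OF R \<rho>B] that by (simp add: fam01_def)
  have M0: "0 \<le> ?M" by (rule Sup01_image_bounds[THEN conjunct1]) (use R' in blast)
  have "min (R C) (Sup01 {\<rho>B E | E. E \<subseteq> B \<and> E \<inter> A = C}) \<le> ?M"
  proof (rule min_Sup01_le[OF _ M0])
    fix r assume "r \<in> {\<rho>B E | E. E \<subseteq> B \<and> E \<inter> A = C}"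
    then obtain E where r: "r = \<rho>B E" and E: "E \<subseteq> B" "E \<inter> A = C" by blast
    have "min (R C) (\<rho>B E) \<le> extend_family A B \<rho>B R E" using E by (simp add: extend_family_def)
    also have "\<dots> \<le> ?M" by (rule Sup01_upper_image) (use E C R' in auto)
    finally show "min (R C) r \<le> ?M" using r by simp
  qed
  moreover have "min (R C) g \<le> min (R C) (Sup01 {\<rho>B E | E. E \<subseteq> B \<and> E \<inter> A = C})"
    using trace by simp
  ultimately show ?thesis by linarith
qed

lemma Kdeg_extend_family:
  assumes R: "fam01 (B \<inter> A) R" and \<rho>B: "fam01 B \<rho>B" and \<rho>G: "fam01 (B \<inter> A) \<rho>G"
    and trace: "\<And>C. C \<subseteq> B \<inter> A \<Longrightarrow> \<rho>G C \<le> Sup01 {\<rho>B E | E. E \<subseteq> B \<and> E \<inter> A = C}"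
  shows "Kdeg (\<lambda>C. min (R C) (\<rho>G C)) (B \<inter> A) + \<rho>B (B - A) - 1
    \<le> Kdeg (extend_family A B \<rho>B R) B"
proof -
  let ?R' = "extend_family A B \<rho>B R" and ?K = "Kdeg (\<lambda>C. min (R C) (\<rho>G C)) (B \<inter> A)"
  have fam: "fam01 (B \<inter> A) (\<lambda>C. min (R C) (\<rho>G C))"
    using R \<rho>G unfolding fam01_def by (auto simp: min_def)
  have K: "?K \<le> 1" using Kdeg_bounds[OF fam] by simp
  have \<rho>BD: "\<rho>B (B - A) \<le> 1" using \<rho>B by (simp add: fam01_def)
  have R': "0 \<le> ?R' E \<and> ?R' E \<le> 1" if "E \<subseteq> B" for E
    using fam01_extend_family[OF R \<rho>B] that by (simp add: fam01_def)
  show ?thesis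
  proof (rule le_KdegI)
    fix x assume x: "x \<in> B"
    define M where "M = Sup01 {?R' E | E. x \<in> E \<and> E \<subseteq> B}"
    have M0: "0 \<le> M"
      unfolding M_def by (rule Sup01_image_bounds[THEN conjunct1]) (use R' in blast)
    show "?K + \<rho>B (B - A) - 1 \<le> M"
    proof (cases "x \<in> A")
      case False
      have "?R' (B - A) \<le> M"
        unfolding M_def by (rule Sup01_upper_image) (use x False R' in auto)
      then have "\<rho>B (B - A) \<le> M" by (simp add: extend_family_def)
      then show ?thesis using K by linarith
    next
      case True
      have "Sup01 {min (R C) (\<rho>G C) | C. x \<in> C \<and> C \<subseteq> B \<inter> A} \<le> M"
      proof (rule Sup01_least[OF _ M0])
        fix s assume "s \<in> {min (R C) (\<rho>G C) | C. x \<in> C \<and> C \<subseteq> B \<inter> A}"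
        then obtain C where s: "s = min (R C) (\<rho>G C)" and C: "x \<in> C" "C \<subseteq> B \<inter> A" by blast
        show "s \<le> M"
          unfolding s M_def by (rule min_le_Sup01_extend_family[OF R \<rho>B C trace[OF C(2)]])
      qed
      then have "?K \<le> M"
        using Kdeg_le_Sup01[OF fam, of x] True x by simp
      then show ?thesis using \<rho>BD by linarith
    qed
  qed (use K \<rho>BD in linarith)
qed

lemma fam01_restrict_family: "fam01 B P \<Longrightarrow> fam01 (B \<inter> A) (restrict_family A B P)"
  unfolding fam01_def restrict_family_def by (auto intro!: Sup01_image_bounds)

lemma restrict_family_upper:
  "fam01 B P \<Longrightarrow> E \<subseteq> B \<Longrightarrow> E \<noteq> B - A \<Longrightarrow> P E \<le> restrict_family A B P (E \<inter> A)"
  unfolding restrict_family_def fam01_def by (rule Sup01_upper) auto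

lemma Kdeg_restrict_family:
  assumes P: "fam01 B P"
  shows "Kdeg P B \<le> Kdeg (restrict_family A B P) (B \<inter> A)"
proof (rule le_KdegI)
  let ?P = "restrict_family A B P"
  have P': "0 \<le> ?P C \<and> ?P C \<le> 1" if "C \<subseteq> B \<inter> A" for C
    using fam01_restrict_family[OF P] that by (simp add: fam01_def)
  fix x assume x: "x \<in> B \<inter> A"
  define M where "M = Sup01 {?P C | C. x \<in> C \<and> C \<subseteq> B \<inter> A}"
  have "Sup01 {P E | E. x \<in> E \<and> E \<subseteq> B} \<le> M"
  proof (rule Sup01_least)
    fix s assume "s \<in> {P E | E. x \<in> E \<and> E \<subseteq> B}"
    then obtain E where s: "s = P E" and E: "x \<in> E" "E \<subseteq> B" by blast
    have "P E \<le> ?P (E \<inter> A)"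
      by (rule restrict_family_upper[OF P E(2)]) (use E x in blast)
    also have "\<dots> \<le> M"
      unfolding M_def by (rule Sup01_upper_image) (use E x P' in auto)
    finally show "s \<le> M" using s by simp
  next
    show "0 \<le> M" unfolding M_def by (rule Sup01_image_bounds[THEN conjunct1]) (use P' in blast)
  qed
  then show "Kdeg P B \<le> M"
    using Kdeg_le_Sup01[OF P, of x] x by simp
qed (use Kdeg_bounds[OF P] in simp)

lemma restrict_family_gtD:
  assumes "\<delta> < restrict_family A B P C" and "0 \<le> \<delta>"
  shows "\<exists>E. E \<subseteq> B \<and> E \<inter> A = C \<and> \<delta> < P E"
proof (rule ccontr)
  assume none: "\<not> ?thesis"
  have "restrict_family A B P C \<le> \<delta>"
    unfolding restrict_family_def
  proof (rule Sup01_least[OF _ assms(2)])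
    fix r assume "r \<in> {P E | E. E \<subseteq> B \<and> E \<inter> A = C \<and> E \<noteq> B - A}"
    then obtain E where r: "r = P E" and E: "E \<subseteq> B" "E \<inter> A = C" by blast
    have "\<not> \<delta> < P E" using none E by blast
    then show "r \<le> \<delta>" using r by simp
  qed
  with assms(1) show False by simp
qed

lemma FFdeg_restrict_family:
  "FFdeg B P \<le> FFdeg (B \<inter> A) (restrict_family A B P)"
proof (rule FFdeg_le)
  fix \<delta> :: real assume \<delta>: "0 \<le> \<delta>" and fin: "finite {E. E \<subseteq> B \<and> \<delta> < P E}"
  have "{C. C \<subseteq> B \<inter> A \<and> \<delta> < restrict_family A B P C} \<subseteq> (\<lambda>E. E \<inter> A) ` {E. E \<subseteq> B \<and> \<delta> < P E}"
  proof
    fix C assume "C \<in> {C. C \<subseteq> B \<inter> A \<and> \<delta> < restrict_family A B P C}"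
    then have "\<delta> < restrict_family A B P C" by simp
    from restrict_family_gtD[OF this \<delta>]
    obtain E where E: "E \<subseteq> B" "E \<inter> A = C" "\<delta> < P E" by blast
    show "C \<in> (\<lambda>E. E \<inter> A) ` {E. E \<subseteq> B \<and> \<delta> < P E}"
      by (rule image_eqI[where x = E]) (use E in auto)
  qed
  then show "finite {C. C \<subseteq> B \<inter> A \<and> \<delta> < restrict_family A B P C}"
    by (rule finite_subset) (rule finite_imageI[OF fin])
qed

lemma finite_subcover_deg_extend_family:
  assumes R: "fam01 (B \<inter> A) R"
  shows "finite_subcover_deg B (extend_family A B \<rho> R) \<le> finite_subcover_deg (B \<inter> A) R"
  unfolding finite_subcover_deg_def[of B]
proof (rule Sup01_least)
  fix s assume "s \<in> {max 0 (Kdeg P B + FFdeg B P - 1) | P.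
    fam01 B P \<and> (\<forall>E. E \<subseteq> B \<longrightarrow> P E \<le> extend_family A B \<rho> R E)}"
  then obtain P where s: "s = max 0 (Kdeg P B + FFdeg B P - 1)" and P: "fam01 B P"
    and PR': "\<forall>E. E \<subseteq> B \<longrightarrow> P E \<le> extend_family A B \<rho> R E" by blast
  let ?P = "restrict_family A B P"
  have PR: "?P C \<le> R C" if "C \<subseteq> B \<inter> A" for C
    unfolding restrict_family_def
  proof (rule Sup01_least)
    fix r assume "r \<in> {P E | E. E \<subseteq> B \<and> E \<inter> A = C \<and> E \<noteq> B - A}"
    then obtain E where E: "r = P E" "E \<subseteq> B" "E \<inter> A = C" "E \<noteq> B - A" by blast
    have "P E \<le> extend_family A B \<rho> R E" using PR' E(2) by blast
    also have "\<dots> \<le> R C" using E(3,4) by (simp add: extend_family_def)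
    finally show "r \<le> R C" using E(1) by simp
  qed (use R that in \<open>simp add: fam01_def\<close>)
  have bound: "max 0 (Kdeg Q (B \<inter> A) + FFdeg (B \<inter> A) Q - 1) \<le> 1" if "fam01 (B \<inter> A) Q" for Q
    using Kdeg_bounds[OF that] FFdeg_bounds[of "B \<inter> A" Q] by simp
  have "max 0 (Kdeg ?P (B \<inter> A) + FFdeg (B \<inter> A) ?P - 1) \<le> finite_subcover_deg (B \<inter> A) R"
    unfolding finite_subcover_deg_def
    by (rule Sup01_upper_image) (use fam01_restrict_family[OF P] PR bound in blast)+
  then show "s \<le> finite_subcover_deg (B \<inter> A) R"
    using s Kdeg_restrict_family[OF P, of A] FFdeg_restrict_family[of B P A] by linarith
qed (use finite_subcover_deg_bounds[of "B \<inter> A" R] in simp)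

lemma Gamma_Int:
  assumes \<rho>B: "fam01 B \<rho>B" and \<rho>G: "fam01 (B \<inter> A) \<rho>G"
    and trace: "\<And>C. C \<subseteq> B \<inter> A \<Longrightarrow> \<rho>G C \<le> Sup01 {\<rho>B E | E. E \<subseteq> B \<and> E \<inter> A = C}"
  shows "Gamma B \<rho>B + \<rho>B (B - A) - 1 \<le> Gamma (B \<inter> A) \<rho>G"
proof -
  have \<rho>BD: "\<rho>B (B - A) \<le> 1" using \<rho>B by (simp add: fam01_def)
  have GB: "Gamma B \<rho>B \<le> 1" using Gamma_bounds[OF \<rho>B] by simp
  show ?thesis
    unfolding Gamma_eq[of "B \<inter> A"]
  proof (rule Inf01_greatest)
    fix s assume "s \<in> {min 1 (1 - max 0 (Kdeg R (B \<inter> A) + subdeg (B \<inter> A) R \<rho>G - 1)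
      + finite_subcover_deg (B \<inter> A) R) | R. fam01 (B \<inter> A) R}"
    then obtain R where R: "fam01 (B \<inter> A) R" and s: "s = min 1 (1 - max 0 (Kdeg R (B \<inter> A)
      + subdeg (B \<inter> A) R \<rho>G - 1) + finite_subcover_deg (B \<inter> A) R)" by blast
    let ?R' = "extend_family A B \<rho>B R"
    have "Gamma B \<rho>B \<le> min 1 (1 - max 0 (Kdeg ?R' B + subdeg B ?R' \<rho>B - 1)
        + finite_subcover_deg B ?R')"
      by (rule Gamma_le[OF fam01_extend_family[OF R \<rho>B] \<rho>B])
    moreover have "1 \<le> subdeg B ?R' \<rho>B"
      by (rule one_le_subdeg) (simp add: extend_family_def)
    moreover note Kdeg_subdeg_le_Kdeg_min[OF R \<rho>G] Kdeg_extend_family[OF R \<rho>B \<rho>G trace]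
      finite_subcover_deg_extend_family[OF R, of \<rho>B]
    moreover have "0 \<le> finite_subcover_deg (B \<inter> A) R" using finite_subcover_deg_bounds by blast
    ultimately show "Gamma B \<rho>B + \<rho>B (B - A) - 1 \<le> s"
      unfolding s using GB \<rho>BD by linarith
  qed (use GB \<rho>BD in linarith)
qed

section \<open>Pre-open sets of a subspace\<close>

lemma FP_le_tauP_rel_Diff:
  "fuzzifying_topology X \<tau> \<Longrightarrow> B \<subseteq> X \<Longrightarrow> FP X \<tau> A \<le> tauP_rel X \<tau> B (B - A)"
  unfolding FP_def tauP_rel_def
  by (rule Sup01_upper_image[where P = "\<lambda>V. V \<subseteq> X \<and> V \<inter> B = B - A"]) (auto dest: tauP_bounds)

lemma tauP_rel_Int_le:
  assumes ft: "fuzzifying_topology X \<tau>"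
  shows "tauP_rel X \<tau> (B \<inter> A) C \<le> Sup01 {tauP_rel X \<tau> B E | E. E \<subseteq> B \<and> E \<inter> A = C}"
  unfolding tauP_rel_def[of X \<tau> "B \<inter> A"]
proof (rule Sup01_least)
  fix s assume "s \<in> {tauP X \<tau> V | V. V \<subseteq> X \<and> V \<inter> (B \<inter> A) = C}"
  then obtain V where s: "s = tauP X \<tau> V" and V: "V \<subseteq> X" "V \<inter> (B \<inter> A) = C" by blast
  have "tauP X \<tau> V \<le> tauP_rel X \<tau> B (V \<inter> B)"
    unfolding tauP_rel_def
    by (rule Sup01_upper_image[where P = "\<lambda>W. W \<subseteq> X \<and> W \<inter> B = V \<inter> B"])
      (use V tauP_bounds[OF ft] in auto)
  also have "\<dots> \<le> Sup01 {tauP_rel X \<tau> B E | E. E \<subseteq> B \<and> E \<inter> A = C}"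
    by (rule Sup01_upper_image) (use V tauP_rel_bounds[OF ft] in auto)
  finally show "s \<le> Sup01 {tauP_rel X \<tau> B E | E. E \<subseteq> B \<and> E \<inter> A = C}" using s by simp
next
  show "0 \<le> Sup01 {tauP_rel X \<tau> B E | E. E \<subseteq> B \<and> E \<inter> A = C}"
    by (rule Sup01_image_bounds[THEN conjunct1]) (use tauP_rel_bounds[OF ft] in blast)
qed

lemma GammaP_Int:
  assumes ft: "fuzzifying_topology X \<tau>" and B: "B \<subseteq> X"
  shows "GammaP X \<tau> B + FP X \<tau> A - 1 \<le> GammaP X \<tau> (B \<inter> A)"
proof -
  have "Gamma B (tauP_rel X \<tau> B) + tauP_rel X \<tau> B (B - A) - 1
      \<le> Gamma (B \<inter> A) (tauP_rel X \<tau> (B \<inter> A))"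
    by (rule Gamma_Int) (use fam01_tauP_rel[OF ft] tauP_rel_Int_le[OF ft] in auto)
  then show ?thesis
    using FP_le_tauP_rel_Diff[OF ft B, of A] unfolding GammaP_def by linarith
qed

lemma NP_le_NPsub:
  assumes ft: "fuzzifying_topology X \<tau>" and x: "x \<in> A"
  shows "NP X \<tau> x B \<le> NPsub X \<tau> A x (B \<inter> A)"
  unfolding NP_def
proof (rule Sup01_least)
  fix s assume "s \<in> {tauP X \<tau> V | V. x \<in> V \<and> V \<subseteq> B \<and> V \<subseteq> X}"
  then obtain V where s: "s = tauP X \<tau> V" and V: "x \<in> V" "V \<subseteq> B" "V \<subseteq> X" by blast
  have "tauP X \<tau> V \<le> tauP_rel X \<tau> A (V \<inter> A)"
    unfolding tauP_rel_def
    by (rule Sup01_upper_image[where P = "\<lambda>W. W \<subseteq> X \<and> W \<inter> A = V \<inter> A"])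
      (use V tauP_bounds[OF ft] in auto)
  also have "\<dots> \<le> NPsub X \<tau> A x (B \<inter> A)"
    unfolding NPsub_def by (rule Sup01_upper_image) (use V x tauP_rel_bounds[OF ft] in auto)
  finally show "s \<le> NPsub X \<tau> A x (B \<inter> A)" using s by simp
qed (use NPsub_bounds[OF ft] in simp)

lemma LPC_pointwise_Int:
  assumes ft: "fuzzifying_topology X \<tau>" and x: "x \<in> A"
  shows "max 0 (Sup01 {max 0 (NP X \<tau> x B + GammaP X \<tau> B - 1) | B. B \<subseteq> X} + FP X \<tau> A - 1)
    \<le> Sup01 {max 0 (NPsub X \<tau> A x G + GammaP X \<tau> G - 1) | G. G \<subseteq> A}"
    (is "max 0 (Sup01 ?L + ?F - 1) \<le> ?M")
proof -
  have F: "0 \<le> ?F \<and> ?F \<le> 1" unfolding FP_def by (rule tauP_bounds[OF ft])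
  have bound: "0 \<le> max 0 (NPsub X \<tau> A x G + GammaP X \<tau> G - 1)
      \<and> max 0 (NPsub X \<tau> A x G + GammaP X \<tau> G - 1) \<le> 1" for G
    using NPsub_bounds[OF ft, of A x G] GammaP_bounds[OF ft, of G] by auto
  have M0: "0 \<le> ?M" by (rule Sup01_image_bounds[THEN conjunct1]) (use bound in blast)
  have "Sup01 ?L \<le> ?M + 1 - ?F"
  proof (rule Sup01_least)
    fix s assume "s \<in> ?L"
    then obtain B where s: "s = max 0 (NP X \<tau> x B + GammaP X \<tau> B - 1)" and B: "B \<subseteq> X" by blast
    have "max 0 (NPsub X \<tau> A x (B \<inter> A) + GammaP X \<tau> (B \<inter> A) - 1) \<le> ?M"
      by (rule Sup01_upper_image) (use bound in auto)
    then show "s \<le> ?M + 1 - ?F"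
      using s NP_le_NPsub[OF ft x, of B] GammaP_Int[OF ft B, of A] M0 F by linarith
  qed (use M0 F in linarith)
  then show ?thesis using M0 by simp
qed

lemma LPC_bounds_at:
  assumes "fuzzifying_topology X \<tau>"
  shows "0 \<le> Sup01 {max 0 (NP X \<tau> x B + GammaP X \<tau> B - 1) | B. B \<subseteq> X}
    \<and> Sup01 {max 0 (NP X \<tau> x B + GammaP X \<tau> B - 1) | B. B \<subseteq> X} \<le> 1"
proof (rule Sup01_image_bounds)
  fix B
  show "0 \<le> max 0 (NP X \<tau> x B + GammaP X \<tau> B - 1) \<and> max 0 (NP X \<tau> x B + GammaP X \<tau> B - 1) \<le> 1"
    using NP_bounds[OF assms, of x B] GammaP_bounds[OF assms, of B] by auto
qed

lemma LPC_le:
  assumes "fuzzifying_topology X \<tau>" and "x \<in> X"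
  shows "LPC X \<tau> \<le> Sup01 {max 0 (NP X \<tau> x B + GammaP X \<tau> B - 1) | B. B \<subseteq> X}"
  unfolding LPC_def by (rule Inf01_lower) (use assms LPC_bounds_at[OF assms(1)] in blast)+

lemma LPC_bounds: "fuzzifying_topology X \<tau> \<Longrightarrow> 0 \<le> LPC X \<tau> \<and> LPC X \<tau> \<le> 1"
  unfolding LPC_def by (rule Inf01_bounds) (use LPC_bounds_at in fast)

theorem theorem4p1:
  fixes X A :: "'a set" and \<tau> :: "'a set \<Rightarrow> real"
  assumes "fuzzifying_topology X \<tau>" and "A \<subseteq> X"
  shows "max 0 (LPC X \<tau> + FP X \<tau> A - 1) \<le> LPC_sub X \<tau> A"
  unfolding LPC_sub_def
proof (rule Inf01_greatest)
  fix t assume "t \<in> (\<lambda>x. Sup01 {max 0 (NPsub X \<tau> A x G + GammaP X \<tau> G - 1) | G. G \<subseteq> A}) ` A"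
  then obtain x where x: "x \<in> A"
    and t: "t = Sup01 {max 0 (NPsub X \<tau> A x G + GammaP X \<tau> G - 1) | G. G \<subseteq> A}" by blast
  have "LPC X \<tau> \<le> Sup01 {max 0 (NP X \<tau> x B + GammaP X \<tau> B - 1) | B. B \<subseteq> X}"
    using LPC_le[OF assms(1)] x assms(2) by blast
  then have "max 0 (LPC X \<tau> + FP X \<tau> A - 1)
      \<le> max 0 (Sup01 {max 0 (NP X \<tau> x B + GammaP X \<tau> B - 1) | B. B \<subseteq> X} + FP X \<tau> A - 1)"
    by simp
  also have "\<dots> \<le> t" unfolding t by (rule LPC_pointwise_Int[OF assms(1) x])
  finally show "max 0 (LPC X \<tau> + FP X \<tau> A - 1) \<le> t" .
next
  show "max 0 (LPC X \<tau> + FP X \<tau> A - 1) \<le> 1"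
    using LPC_bounds[OF assms(1)] tauP_bounds[OF assms(1), of "X - A"] unfolding FP_def by simp
qed

end
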